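(* For every real $x$ and every natural number $n$, $\mathrm{LB}_{\mathrm{atan}}(x,n) \le \arctan(x) \le \mathrm{UB}_{\mathrm{atan}}(x,n)$.
   Context: For $0 < x \le 1$ and natural $n$: \[\mathrm{LB}_{\mathrm{atan}}(x,n) = \sum_{i=0}^{2n+1} (-1)^i\frac{x^{2i+1}}{2i+1}, \qquad \mathrm{UB}_{\mathrm{atan}}(x,n) = \sum_{i=0}^{2n} (-1)^i\frac{x^{2i+1}}{2i+1}.\] Bounds on $\pi$: $\mathrm{LB}_{\pi}(n) = 16\,\mathrm{LB}_{\mathrm{atan}}(1/5,n) - 4\,\mathrm{UB}_{\mathrm{atan}}(1/239,n)$ and $\mathrm{UB}_{\pi}(n) = 16\,\mathrm{UB}_{\mathrm{atan}}(1/5,n) - 4\,\mathrm{LB}_{\mathrm{atan}}(1/239,n)$. Extension to all reals: $\mathrm{LB}_{\mathrm{atan}}(0,n)=\mathrm{UB}_{\mathrm{atan}}(0,n)=0$; for $x>1$: $\mathrm{LB}_{\mathrm{atan}}(x,n) = \frac{\mathrm{LB}_{\pi}(n)}{2} - \mathrm{UB}_{\mathrm{atan}}(1/x,n)$ and $\mathrm{UB}_{\mathrm{atan}}(x,n) = \frac{\mathrm{UB}_{\pi}(n)}{2} - \mathrm{LB}_{\mathrm{atan}}(1/x,n)$; for $x<0$: $\mathrm{LB}_{\mathrm{atan}}(x,n) = -\mathrm{UB}_{\mathrm{atan}}(-x,n)$ and $\mathrm{UB}_{\mathrm{atan}}(x,n) = -\mathrm{LB}_{\mathrm{atan}}(-x,n)$.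 *)

theory Defs
  imports Complex_Main
begin

text \<open>Truncated Taylor sums of arctan, intended for 0 < x \<le> 1.\<close>
definition lb_atan_base :: "real \<Rightarrow> nat \<Rightarrow> real" where
  "lb_atan_base x n = (\<Sum>i=0..2*n+1. (-1)^i * x^(2*i+1) / real (2*i+1))"

definition ub_atan_base :: "real \<Rightarrow> nat \<Rightarrow> real" where
  "ub_atan_base x n = (\<Sum>i=0..2*n. (-1)^i * x^(2*i+1) / real (2*i+1))"

definition lb_pi :: "nat \<Rightarrow> real" where
  "lb_pi n = 16 * lb_atan_base (1/5) n - 4 * ub_atan_base (1/239) n"

definition ub_pi :: "nat \<Rightarrow> real" where
  "ub_pi n = 16 * ub_atan_base (1/5) n - 4 * lb_atan_base (1/239) n"

definition lb_atan_nonneg :: "real \<Rightarrow> nat \<Rightarrow> real" where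
  "lb_atan_nonneg x n =
     (if x = 0 then 0
      else if x \<le> 1 then lb_atan_base x n
      else lb_pi n / 2 - ub_atan_base (1/x) n)"

definition ub_atan_nonneg :: "real \<Rightarrow> nat \<Rightarrow> real" where
  "ub_atan_nonneg x n =
     (if x = 0 then 0
      else if x \<le> 1 then ub_atan_base x n
      else ub_pi n / 2 - lb_atan_base (1/x) n)"

definition lb_atan :: "real \<Rightarrow> nat \<Rightarrow> real" where
  "lb_atan x n = (if x < 0 then - ub_atan_nonneg (-x) n else lb_atan_nonneg x n)"

definition ub_atan :: "real \<Rightarrow> nat \<Rightarrow> real" where
  "ub_atan x n = (if x < 0 then - lb_atan_nonneg (-x) n else ub_atan_nonneg x n)"

end

theory Submission
  imports Defs
begin

text \<open>For \<open>0 \<le> x \<le> 1\<close> the Taylor series of arctan is a Leibniz series, so its partial sums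
  alternately under- and overestimate arctan; Machin's formula transfers these bounds to \<open>\<pi>\<close>,
  the identity \<open>arctan x = \<pi>/2 - arctan (1/x)\<close> covers \<open>x > 1\<close>, and oddness covers \<open>x < 0\<close>.\<close>

lemma arctan_series_term_decreasing:
  fixes x :: real
  assumes "0 \<le> x" "x \<le> 1"
  shows "1 / real (Suc k * 2 + 1) * x ^ (Suc k * 2 + 1) \<le> 1 / real (k * 2 + 1) * x ^ (k * 2 + 1)"
proof -
  have "x ^ (Suc k * 2 + 1) \<le> x ^ (k * 2 + 1)"
    by (rule power_decreasing) (use assms in auto)
  then show ?thesis
    using assms by (intro mult_mono frac_le) auto
qed

lemma arctan_partial_sums_bounds:
  fixes x :: real
  assumes "0 \<le> x" "x \<le> 1"
  defines "a \<equiv> \<lambda>k. 1 / real (k * 2 + 1) * x ^ (k * 2 + 1)"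
  shows "(\<Sum>k<2*n. (-1)^k * a k) \<le> arctan x"
    and "arctan x \<le> (\<Sum>k<2*n+1. (-1)^k * a k)"
proof -
  have lim: "a \<longlonglongrightarrow> 0"
    unfolding a_def by (rule zeroseq_arctan_series) (use assms in auto)
  have nonneg: "\<And>k. 0 \<le> a k"
    unfolding a_def using assms by simp
  have decr: "\<And>k. a (Suc k) \<le> a k"
    unfolding a_def by (rule arctan_series_term_decreasing[OF assms(1,2)])
  have "arctan x = (\<Sum>k. (-1)^k * a k)"
    unfolding a_def by (rule arctan_series) (use assms in auto)
  then show "(\<Sum>k<2*n. (-1)^k * a k) \<le> arctan x"
    and "arctan x \<le> (\<Sum>k<2*n+1. (-1)^k * a k)"
    using summable_Leibniz'(2,4)[OF lim nonneg decr] by simp_all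
qed

lemma arctan_partial_sum_eq:
  fixes x :: real
  shows "(\<Sum>i=0..m. (-1)^i * x^(2*i+1) / real (2*i+1))
       = (\<Sum>k<Suc m. (-1)^k * (1 / real (k * 2 + 1) * x ^ (k * 2 + 1)))"
  by (rule sum.cong) (auto simp: atLeast0AtMost lessThan_Suc_atMost mult.commute)

lemma atan_base_bounds:
  fixes x :: real
  assumes "0 \<le> x" "x \<le> 1"
  shows "lb_atan_base x n \<le> arctan x \<and> arctan x \<le> ub_atan_base x n"
proof -
  have "Suc (2*n+1) = 2 * Suc n" "Suc (2*n) = 2*n+1"
    by simp_all
  then have "lb_atan_base x n = (\<Sum>k<2 * Suc n. (-1)^k * (1 / real (k * 2 + 1) * x ^ (k * 2 + 1)))"
    and "ub_atan_base x n = (\<Sum>k<2*n+1. (-1)^k * (1 / real (k * 2 + 1) * x ^ (k * 2 + 1)))"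
    unfolding lb_atan_base_def ub_atan_base_def arctan_partial_sum_eq by (simp_all only:)
  then show ?thesis
    using arctan_partial_sums_bounds(1)[OF assms, of "Suc n"]
      arctan_partial_sums_bounds(2)[OF assms, of n]
    by (simp only:)
qed

lemma pi_bounds: "lb_pi n \<le> pi \<and> pi \<le> ub_pi n"
proof -
  have "pi = 16 * arctan (1/5) - 4 * arctan (1/239)"
    using machin by simp
  then show ?thesis
    using atan_base_bounds[of "1/5" n] atan_base_bounds[of "1/239" n]
    unfolding lb_pi_def ub_pi_def by linarith
qed

lemma atan_nonneg_bounds:
  fixes x :: real
  assumes "0 \<le> x"
  shows "lb_atan_nonneg x n \<le> arctan x \<and> arctan x \<le> ub_atan_nonneg x n"
proof (cases "x \<le> 1")
  case True
  then show ?thesis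
    using atan_base_bounds[of x n] assms by (simp add: lb_atan_nonneg_def ub_atan_nonneg_def)
next
  case False
  have "arctan (1/x) = pi/2 - arctan x"
    using arctan_inverse[of x] False by simp
  then show ?thesis
    using atan_base_bounds[of "1/x" n] pi_bounds[of n] False
    by (simp add: lb_atan_nonneg_def ub_atan_nonneg_def)
qed

theorem proposition5:
  fixes x :: real and n :: nat
  shows "lb_atan x n \<le> arctan x \<and> arctan x \<le> ub_atan x n"
proof (cases "x < 0")
  case True
  then show ?thesis
    using atan_nonneg_bounds[of "-x" n] by (simp add: lb_atan_def ub_atan_def arctan_minus)
next
  case False
  then show ?thesis
    using atan_nonneg_bounds[of x n] by (simp add: lb_atan_def ub_atan_def)
qed

end
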